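(* Let $A$ be a real $3\times3$ matrix whose eigenvalues are $\lambda_1$ (with algebraic multiplicity $2$) and $\lambda_2\neq\lambda_1$, and let $h>0$. If $\lambda_1=0$, set $\psi=1$, $\phi=h$, $\theta=\dfrac{e^{\lambda_2h}-\lambda_2h-1}{h^2\lambda_2^2}$. If $\lambda_1\neq0$, set $$\phi=\frac{(\lambda_2^2h-\lambda_1^2h+2\lambda_1)e^{\lambda_1h}-2\lambda_1e^{\lambda_2h}}{(\lambda_1-\lambda_2)^2},\qquad \psi=\frac{(2-\lambda_1h)e^{\lambda_1h}-\lambda_1\phi}{2},\qquad \theta=\frac{he^{\lambda_1h}-\phi}{2\lambda_1\phi^2}.$$ Then (whenever these expressions are defined) the explicit difference scheme $$\frac{\mathbf{x}_{k+1}-\psi\mathbf{x}_k}{\phi}=A\mathbf{x}_k+\theta\phi A^2\mathbf{x}_k$$ is exact for the system $\mathbf{x}'=A\mathbf{x}$.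
   Context: A one-step difference scheme with step size $h>0$ for $\mathbf{x}'=M\mathbf{x}$ is called exact if for every initial vector $\mathbf{x}_0$ the sequence $(\mathbf{x}_k)$ it generates satisfies $\mathbf{x}_k=\mathbf{x}(kh)$ for all $k\ge 0$, where $\mathbf{x}(t)$ solves $\mathbf{x}'=M\mathbf{x}$, $\mathbf{x}(0)=\mathbf{x}_0$. *)

theory Defs
  imports "HOL-Analysis.Analysis"
begin

definition charpoly3 :: "real^3^3 \<Rightarrow> real \<Rightarrow> real" where
  "charpoly3 A t = det (t *\<^sub>R mat 1 - A)"

definition eigen_double_simple :: "real^3^3 \<Rightarrow> real \<Rightarrow> real \<Rightarrow> bool" where
  "eigen_double_simple A l1 l2 \<longleftrightarrow> l1 \<noteq> l2 \<and>
     (\<forall>t. charpoly3 A t = (t - l1)^2 * (t - l2))"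

definition phi_c :: "real \<Rightarrow> real \<Rightarrow> real \<Rightarrow> real" where
  "phi_c l1 l2 h = (if l1 = 0 then h else
     ((l2^2 * h - l1^2 * h + 2 * l1) * exp (l1 * h) - 2 * l1 * exp (l2 * h)) / (l1 - l2)^2)"

definition psi_c :: "real \<Rightarrow> real \<Rightarrow> real \<Rightarrow> real" where
  "psi_c l1 l2 h = (if l1 = 0 then 1 else
     ((2 - l1 * h) * exp (l1 * h) - l1 * phi_c l1 l2 h) / 2)"

definition theta_c :: "real \<Rightarrow> real \<Rightarrow> real \<Rightarrow> real" where
  "theta_c l1 l2 h = (if l1 = 0 then (exp (l2 * h) - l2 * h - 1) / (h^2 * l2^2) else
     (h * exp (l1 * h) - phi_c l1 l2 h) / (2 * l1 * (phi_c l1 l2 h)^2))"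

text \<open>Exactness of a one-step scheme given as a relation R between consecutive
  iterates (R x_k x_{k+1}): every sequence generated by the scheme from x0
  agrees with the exact solution of x' = M x, x(0) = x0, at the grid points kh.\<close>
definition exact_scheme :: "real \<Rightarrow> ((real^'n) \<Rightarrow> (real^'n) \<Rightarrow> bool) \<Rightarrow> real^'n^'n \<Rightarrow> bool" where
  "exact_scheme h R M \<longleftrightarrow>
     (\<forall>(xs :: nat \<Rightarrow> real^'n) (x :: real \<Rightarrow> real^'n).
        (\<forall>k. R (xs k) (xs (Suc k))) \<and> x 0 = xs 0 \<and>
        (\<forall>t. (x has_vector_derivative (M *v x t)) (at t))
        \<longrightarrow> (\<forall>k. xs k = x (real k * h)))"

end

theory Submission
  imports Defs
begin

text \<open>Since the characteristic polynomial of \<open>A\<close> is \<open>(t - \<lambda>\<^sub>1)\<^sup>2 (t - \<lambda>\<^sub>2)\<close>, Cayley--Hamilton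
  gives \<open>N\<^sup>3 = (\<lambda>\<^sub>2 - \<lambda>\<^sub>1) N\<^sup>2\<close> for \<open>N = A - \<lambda>\<^sub>1 I\<close>. Hence the flow of \<open>x' = A x\<close> over time \<open>s\<close> is
  \<open>e\<^bsup>\<lambda>\<^sub>1 s\<^esup> I + s e\<^bsup>\<lambda>\<^sub>1 s\<^esup> N + c(s) N\<^sup>2\<close>, where \<open>c(s)\<close> is the divided difference of \<open>z \<mapsto> e\<^bsup>z s\<^esup>\<close>
  at the nodes \<open>\<lambda>\<^sub>1, \<lambda>\<^sub>1, \<lambda>\<^sub>2\<close>. Expanding the step map \<open>\<psi> I + \<phi> A + \<theta>\<phi>\<^sup>2 A\<^sup>2\<close> of the scheme in
  powers of \<open>N\<close>, the coefficients \<open>\<phi>, \<psi>, \<theta>\<close> are exactly those making it equal to the flow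
  over one step \<open>h\<close>, so the iterates stay on the exact solution.\<close>

lemma exact_schemeI:
  assumes step: "\<And>u v. R u v \<Longrightarrow> v = F u"
    and flow: "\<And>x t. (\<And>t. (x has_vector_derivative (M *v x t)) (at t)) \<Longrightarrow> x (t + h) = F (x t)"
  shows "exact_scheme h R M"
  unfolding exact_scheme_def
proof (intro allI impI)
  fix xs x and k :: nat
  assume H: "(\<forall>k. R (xs k) (xs (Suc k))) \<and> x 0 = xs 0 \<and> (\<forall>t. (x has_vector_derivative (M *v x t)) (at t))"
  show "xs k = x (real k * h)"
  proof (induction k)
    case 0
    then show ?case using H by simp
  next
    case (Suc k)
    have "xs (Suc k) = F (x (real k * h))"
      using step H Suc by metis
    also have "\<dots> = x (real (Suc k) * h)"
      using flow[of x "real k * h"] H by (simp add: algebra_simps)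
    finally show ?case .
  qed
qed

definition trace3 :: "real^3^3 \<Rightarrow> real" where
  "trace3 A = A$1$1 + A$2$2 + A$3$3"

definition principal_minor_sum3 :: "real^3^3 \<Rightarrow> real" where
  "principal_minor_sum3 A = A$1$1 * A$2$2 - A$1$2 * A$2$1 + A$1$1 * A$3$3 - A$1$3 * A$3$1
     + A$2$2 * A$3$3 - A$2$3 * A$3$2"

lemma charpoly3_expand:
  "charpoly3 A t = t^3 - trace3 A * t^2 + principal_minor_sum3 A * t - det A"
  unfolding charpoly3_def trace3_def principal_minor_sum3_def
  by (simp add: det_3 mat_def algebra_simps power3_eq_cube power2_eq_square)

lemma cayley_hamilton3:
  fixes A :: "real^3^3"
  shows "A *v (A *v (A *v v)) - trace3 A *\<^sub>R (A *v (A *v v))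
           + principal_minor_sum3 A *\<^sub>R (A *v v) - det A *\<^sub>R v = 0"
  unfolding trace3_def principal_minor_sum3_def
  by (simp add: vec_eq_iff forall_3 det_3 matrix_vector_mult_def sum_3 algebra_simps)

lemma charpoly3_double_root_coeffs:
  assumes "\<forall>t. charpoly3 A t = (t - l1)^2 * (t - l2)"
  shows "trace3 A = 2 * l1 + l2" "principal_minor_sum3 A = l1^2 + 2 * l1 * l2" "det A = l1^2 * l2"
proof -
  have at: "t^3 - trace3 A * t^2 + principal_minor_sum3 A * t - det A = (t - l1)^2 * (t - l2)" for t
    using assms charpoly3_expand by metis
  show det: "det A = l1^2 * l2" using at[of 0] by simp
  have "1 - trace3 A + principal_minor_sum3 A - det A = (1 - l1)^2 * (1 - l2)"
    "-1 - trace3 A - principal_minor_sum3 A - det A = (-1 - l1)^2 * (-1 - l2)"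
    using at[of 1] at[of "-1"] by simp_all
  then show "trace3 A = 2 * l1 + l2" "principal_minor_sum3 A = l1^2 + 2 * l1 * l2"
    using det by (auto simp: algebra_simps power2_eq_square)
qed

lemma charpoly3_double_root_shift_cube:
  fixes A :: "real^3^3"
  assumes "\<forall>t. charpoly3 A t = (t - l1)^2 * (t - l2)"
  defines "N \<equiv> A - l1 *\<^sub>R mat 1"
  shows "N *v (N *v (N *v v)) = (l2 - l1) *\<^sub>R (N *v (N *v v))"
proof -
  have Nv: "N *v w = A *v w - l1 *\<^sub>R w" for w
    unfolding N_def by (simp add: matrix_vector_mult_diff_rdistrib scaleR_matrix_vector_assoc[symmetric])
  have "A *v (A *v (A *v v))
      = (2 * l1 + l2) *\<^sub>R (A *v (A *v v)) - (l1^2 + 2 * l1 * l2) *\<^sub>R (A *v v) + (l1^2 * l2) *\<^sub>R v"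
    using cayley_hamilton3[of A v] charpoly3_double_root_coeffs[OF assms(1)]
    by (simp add: algebra_simps)
  then show ?thesis
    unfolding Nv by (simp add: algebra_simps power2_eq_square scaleR_2[symmetric])
qed

lemma shift_matrix_vector: "(l *\<^sub>R mat 1 + N) *v v = l *\<^sub>R v + N *v (v :: real^'n)"
  by (simp add: matrix_vector_mult_add_rdistrib scaleR_matrix_vector_assoc[symmetric])

definition exp_divdiff2 :: "real \<Rightarrow> real \<Rightarrow> real \<Rightarrow> real" where
  "exp_divdiff2 l1 l2 s = (exp (l2 * s) - exp (l1 * s) - s * (l2 - l1) * exp (l1 * s)) / (l2 - l1)^2"

lemma exp_divdiff2_has_derivative:
  assumes "l1 \<noteq> l2"
  shows "(exp_divdiff2 l1 l2 has_real_derivative s * exp (l1 * s) + l2 * exp_divdiff2 l1 l2 s) (at s)"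
proof -
  have "(exp_divdiff2 l1 l2 has_real_derivative
      (l2 * exp (l2 * s) - l1 * exp (l1 * s) - (l2 - l1) * exp (l1 * s) - s * (l2 - l1) * l1 * exp (l1 * s))
        / (l2 - l1)^2) (at s)"
    unfolding exp_divdiff2_def [abs_def]
    by (rule DERIV_cdivide) (auto intro!: derivative_eq_intros simp: algebra_simps)
  moreover have "(l2 * exp (l2 * s) - l1 * exp (l1 * s) - (l2 - l1) * exp (l1 * s)
      - s * (l2 - l1) * l1 * exp (l1 * s)) / (l2 - l1)^2 = s * exp (l1 * s) + l2 * exp_divdiff2 l1 l2 s"
    using assms unfolding exp_divdiff2_def by (simp add: field_simps) (simp add: algebra_simps power2_eq_square)
  ultimately show ?thesis by simp
qed

text \<open>The candidate flow \<open>E(\<tau>) = a(\<tau>) I + b(\<tau>) N + c(\<tau>) N\<^sup>2\<close> satisfies \<open>E' = E (\<lambda>\<^sub>1 I + N)\<close>,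
  so \<open>G(r) = E(t + s - r) x(r)\<close> has derivative zero; compare \<open>G(t + s)\<close> with \<open>G(t)\<close>.\<close>
lemma linear_ode_flow_shift_cube:
  fixes N :: "real^'n^'n" and x :: "real \<Rightarrow> real^'n"
  assumes "l1 \<noteq> l2"
    and N3: "\<And>v. N *v (N *v (N *v v)) = (l2 - l1) *\<^sub>R (N *v (N *v v))"
    and sol: "\<And>t. (x has_vector_derivative ((l1 *\<^sub>R mat 1 + N) *v x t)) (at t)"
  shows "x (t + s) = exp (l1 * s) *\<^sub>R x t + (s * exp (l1 * s)) *\<^sub>R (N *v x t)
           + exp_divdiff2 l1 l2 s *\<^sub>R (N *v (N *v x t))"
proof -
  let ?a = "\<lambda>r. exp (l1 * r)" and ?b = "\<lambda>r. r * exp (l1 * r)" and ?c = "exp_divdiff2 l1 l2"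
  define G where "G r = ?a (t + s - r) *\<^sub>R x r + ?b (t + s - r) *\<^sub>R (N *v x r)
           + ?c (t + s - r) *\<^sub>R (N *v (N *v x r))" for r
  have Nx: "((\<lambda>r. N *v x r) has_vector_derivative N *v (l1 *\<^sub>R x r + N *v x r)) (at r)" for r
    using bounded_linear.has_vector_derivative[OF matrix_vector_mul_bounded_linear sol]
    by (simp add: shift_matrix_vector)
  have NNx: "((\<lambda>r. N *v (N *v x r)) has_vector_derivative N *v (N *v (l1 *\<^sub>R x r + N *v x r))) (at r)" for r
    using bounded_linear.has_vector_derivative[OF matrix_vector_mul_bounded_linear Nx] .
  have "(G has_vector_derivative 0) (at r)" for r
  proof -
    have "((\<lambda>r. t + s - r) has_real_derivative -1) (at r)"
      by (auto intro!: derivative_eq_intros)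
    from DERIV_chain2[OF exp_divdiff2_has_derivative[OF assms(1)] this]
    have dc: "((\<lambda>r. ?c (t + s - r)) has_real_derivative -(?b (t + s - r) + l2 * ?c (t + s - r))) (at r)"
      by simp
    have da: "((\<lambda>r. ?a (t + s - r)) has_real_derivative -(l1 * ?a (t + s - r))) (at r)"
      by (auto intro!: derivative_eq_intros)
    have db: "((\<lambda>r. ?b (t + s - r)) has_real_derivative -(?a (t + s - r) + l1 * ?b (t + s - r))) (at r)"
      by (auto intro!: derivative_eq_intros simp: algebra_simps)
    have "(G has_vector_derivative
        (?a (t + s - r) *\<^sub>R (l1 *\<^sub>R x r + N *v x r) + (-(l1 * ?a (t + s - r))) *\<^sub>R x r)
      + (?b (t + s - r) *\<^sub>R (N *v (l1 *\<^sub>R x r + N *v x r))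
          + (-(?a (t + s - r) + l1 * ?b (t + s - r))) *\<^sub>R (N *v x r))
      + (?c (t + s - r) *\<^sub>R (N *v (N *v (l1 *\<^sub>R x r + N *v x r)))
          + (-(?b (t + s - r) + l2 * ?c (t + s - r))) *\<^sub>R (N *v (N *v x r))))
      (at r)"
      unfolding G_def using sol[of r]
      by (intro has_vector_derivative_add has_vector_derivative_scaleR da db dc Nx NNx)
        (simp_all add: shift_matrix_vector)
    then show ?thesis
      by (simp add: N3 algebra_simps)
  qed
  then obtain g where "\<And>r. G r = g"
    using has_vector_derivative_zero_constant[of UNIV G] by auto
  then have "G (t + s) = G t" by simp
  then show ?thesis unfolding G_def by (simp add: exp_divdiff2_def)
qed

lemma explicit_scheme_step_iff:
  fixes A :: "real^'n^'n"
  assumes "\<phi> \<noteq> 0"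
  shows "(1 / \<phi>) *\<^sub>R (v - \<psi> *\<^sub>R u) = A *v u + (\<theta> * \<phi>) *\<^sub>R ((A ** A) *v u)
    \<longleftrightarrow> v = \<psi> *\<^sub>R u + \<phi> *\<^sub>R (A *v u) + (\<theta> * \<phi>^2) *\<^sub>R (A *v (A *v u))"
proof -
  have unscale: "(1 / \<phi>) *\<^sub>R w = z \<longleftrightarrow> w = \<phi> *\<^sub>R z" for w z :: "real^'n"
    using assms by auto
  show ?thesis
    unfolding unscale matrix_vector_mul_assoc[symmetric]
    by (auto simp: algebra_simps power2_eq_square)
qed

lemma quadratic_in_shift_matrix:
  fixes N :: "real^'n^'n"
  assumes "p0 + p1 * l + p2 * l^2 = q0" "p1 + 2 * p2 * l = q1" "p2 = q2"
  shows "p0 *\<^sub>R u + p1 *\<^sub>R ((l *\<^sub>R mat 1 + N) *v u) + p2 *\<^sub>R ((l *\<^sub>R mat 1 + N) *v ((l *\<^sub>R mat 1 + N) *v u))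
    = q0 *\<^sub>R u + q1 *\<^sub>R (N *v u) + q2 *\<^sub>R (N *v (N *v u))"
  unfolding shift_matrix_vector assms(1-3)[symmetric]
  by (simp add: matrix_vector_mult_scaleR matrix_vector_right_distrib scaleR_add_right scaleR_add_left
      power2_eq_square) (simp add: vec_eq_iff)

lemma scheme_coefficients_eq_exp:
  assumes "l1 \<noteq> l2" "h > 0" "l1 \<noteq> 0 \<Longrightarrow> phi_c l1 l2 h \<noteq> 0"
  defines "c \<equiv> theta_c l1 l2 h * (phi_c l1 l2 h)^2"
  shows "psi_c l1 l2 h + phi_c l1 l2 h * l1 + c * l1^2 = exp (l1 * h)"
    and "phi_c l1 l2 h + 2 * c * l1 = h * exp (l1 * h)"
    and "c = exp_divdiff2 l1 l2 h"
proof -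
  have d: "(l2 - l1)^2 \<noteq> 0" "(l1 - l2)^2 = (l2 - l1)^2"
    using assms(1) by (simp_all add: power2_commute)
  consider "l1 = 0" | "l1 \<noteq> 0" by blast
  then have "psi_c l1 l2 h + phi_c l1 l2 h * l1 + c * l1^2 = exp (l1 * h)
    \<and> phi_c l1 l2 h + 2 * c * l1 = h * exp (l1 * h) \<and> c = exp_divdiff2 l1 l2 h"
  proof cases
    case 1
    then show ?thesis
      using assms(2) d unfolding c_def phi_c_def psi_c_def theta_c_def exp_divdiff2_def
      by (simp add: field_simps power2_eq_square)
  next
    case 2
    then have c: "c = (h * exp (l1 * h) - phi_c l1 l2 h) / (2 * l1)"
      using assms(3) unfolding c_def theta_c_def by (simp add: field_simps power2_eq_square)
    then have "c * l1^2 = l1 * (h * exp (l1 * h) - phi_c l1 l2 h) / 2"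
      using 2 by (simp add: power2_eq_square)
    then have "psi_c l1 l2 h + phi_c l1 l2 h * l1 + c * l1^2 = exp (l1 * h)"
      unfolding psi_c_def using 2 by (simp add: field_simps)
    moreover have "phi_c l1 l2 h + 2 * c * l1 = h * exp (l1 * h)"
      using c 2 by (simp add: field_simps)
    moreover have "c = exp_divdiff2 l1 l2 h"
      unfolding c phi_c_def exp_divdiff2_def using 2 d
      by (simp add: field_simps) (simp add: algebra_simps power2_eq_square power4_eq_xxxx)
    ultimately show ?thesis by blast
  qed
  then show "psi_c l1 l2 h + phi_c l1 l2 h * l1 + c * l1^2 = exp (l1 * h)"
    and "phi_c l1 l2 h + 2 * c * l1 = h * exp (l1 * h)"
    and "c = exp_divdiff2 l1 l2 h" by auto
qed

theorem mainTheorem13: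
  fixes A :: "real^3^3" and l1 l2 h :: real
  assumes "eigen_double_simple A l1 l2"
    and "h > 0"
    and "l1 \<noteq> 0 \<Longrightarrow> phi_c l1 l2 h \<noteq> 0"
  shows "exact_scheme h
           (\<lambda>xk xk1. (1 / phi_c l1 l2 h) *\<^sub>R (xk1 - psi_c l1 l2 h *\<^sub>R xk)
              = A *v xk + (theta_c l1 l2 h * phi_c l1 l2 h) *\<^sub>R ((A ** A) *v xk))
           A"
proof -
  have ne: "l1 \<noteq> l2" and cp: "\<forall>t. charpoly3 A t = (t - l1)^2 * (t - l2)"
    using assms(1) unfolding eigen_double_simple_def by auto
  define N where "N = A - l1 *\<^sub>R mat 1"
  have A: "A = l1 *\<^sub>R mat 1 + N" unfolding N_def by simp
  have N3: "\<And>v. N *v (N *v (N *v v)) = (l2 - l1) *\<^sub>R (N *v (N *v v))"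
    unfolding N_def by (rule charpoly3_double_root_shift_cube[OF cp])
  have "phi_c l1 l2 h \<noteq> 0"
    using assms(2,3) by (cases "l1 = 0") (auto simp: phi_c_def)
  note step = explicit_scheme_step_iff[OF this, where A = A]
  note coeffs = scheme_coefficients_eq_exp[OF ne assms(2,3)]
  define F where "F u = exp (l1 * h) *\<^sub>R u + (h * exp (l1 * h)) *\<^sub>R (N *v u)
                      + exp_divdiff2 l1 l2 h *\<^sub>R (N *v (N *v u))" for u
  have "v = F u" if "(1 / phi_c l1 l2 h) *\<^sub>R (v - psi_c l1 l2 h *\<^sub>R u)
              = A *v u + (theta_c l1 l2 h * phi_c l1 l2 h) *\<^sub>R ((A ** A) *v u)" for u v
  proof -
    from that have "v = psi_c l1 l2 h *\<^sub>R u + phi_c l1 l2 h *\<^sub>R (A *v u)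
                 + (theta_c l1 l2 h * (phi_c l1 l2 h)^2) *\<^sub>R (A *v (A *v u))"
      unfolding step .
    also have "\<dots> = F u"
      unfolding F_def A by (rule quadratic_in_shift_matrix[OF coeffs])
    finally show ?thesis .
  qed
  moreover have "x (t + h) = F (x t)" if "\<And>t. (x has_vector_derivative (A *v x t)) (at t)" for x t
    unfolding F_def using that unfolding A by (rule linear_ode_flow_shift_cube[OF ne N3])
  ultimately show ?thesis by (rule exact_schemeI)
qed

end
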